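(* Let $k$ and $m$ be positive integers, let $T$ be a tree of order $m$, and let $G$ be a $k$-edge-connected graph with $\delta(G)>4(k+m)^2$. Then $G$ contains a subtree $T'$ isomorphic to $T$ such that $G-V(T')$ is $k$-edge-connected.
   Context: All graphs are finite, undirected, without loops or multiple edges. $\delta(G)$ is the minimum degree of $G$. For $S\subseteq V(G)$, $G-S$ denotes the subgraph of $G$ induced by $V(G)\setminus S$. The edge-connectivity $\kappa'(G)$ is the minimum size of an edge set $U\subseteq E(G)$ such that $G-U$ is disconnected; a graph is $k$-edge-connected if $\kappa'(G)\geq k$. By convention a trivial (one-vertex) graph is $1$-edge-connected but not $k$-edge-connected for any $k>1$. *)

theory Defs
  imports Main
begin

definition graph :: "'a set \<Rightarrow> 'a set set \<Rightarrow> bool" where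
  "graph V E \<longleftrightarrow> finite V \<and> (\<forall>e\<in>E. \<exists>x y. x \<noteq> y \<and> x \<in> V \<and> y \<in> V \<and> e = {x, y})"

definition degree :: "'a set set \<Rightarrow> 'a \<Rightarrow> nat" where
  "degree E v = card {e \<in> E. v \<in> e}"

text \<open>Minimum degree of a graph with nonempty vertex set.\<close>
definition min_degree :: "'a set \<Rightarrow> 'a set set \<Rightarrow> nat" where
  "min_degree V E = Min (degree E ` V)"

definition adj_rel :: "'a set set \<Rightarrow> ('a \<times> 'a) set" where
  "adj_rel E = {(x, y). {x, y} \<in> E}"

definition connected_graph :: "'a set \<Rightarrow> 'a set set \<Rightarrow> bool" where
  "connected_graph V E \<longleftrightarrow> V \<noteq> {} \<and> (\<forall>x\<in>V. \<forall>y\<in>V. (x, y) \<in> (adj_rel E)\<^sup>*)"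

text \<open>k-edge-connected: a trivial (one-vertex) graph is 1-edge-connected but not
k-edge-connected for k > 1; a nontrivial graph is k-edge-connected iff deleting
any set of fewer than k edges leaves it connected (i.e. its edge-connectivity is
at least k).\<close>
definition k_edge_connected :: "'a set \<Rightarrow> 'a set set \<Rightarrow> nat \<Rightarrow> bool" where
  "k_edge_connected V E k \<longleftrightarrow> V \<noteq> {} \<and>
     (if card V = 1 then k \<le> 1
      else (\<forall>U. U \<subseteq> E \<and> card U < k \<longrightarrow> connected_graph V (E - U)))"

definition is_cycle :: "'a set \<Rightarrow> 'a set set \<Rightarrow> 'a list \<Rightarrow> bool" where
  "is_cycle V E cs \<longleftrightarrow> length cs \<ge> 3 \<and> distinct cs \<and> set cs \<subseteq> V \<and>
     (\<forall>i < length cs - 1. {cs ! i, cs ! (i + 1)} \<in> E) \<and> {last cs, hd cs} \<in> E"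

definition acyclic_graph :: "'a set \<Rightarrow> 'a set set \<Rightarrow> bool" where
  "acyclic_graph V E \<longleftrightarrow> (\<nexists>cs. is_cycle V E cs)"

definition tree :: "'a set \<Rightarrow> 'a set set \<Rightarrow> bool" where
  "tree V E \<longleftrightarrow> graph V E \<and> connected_graph V E \<and> acyclic_graph V E"

definition subgraph :: "'a set \<Rightarrow> 'a set set \<Rightarrow> 'a set \<Rightarrow> 'a set set \<Rightarrow> bool" where
  "subgraph H F V E \<longleftrightarrow> graph H F \<and> H \<subseteq> V \<and> F \<subseteq> E"

definition graph_iso :: "'a set \<Rightarrow> 'a set set \<Rightarrow> 'b set \<Rightarrow> 'b set set \<Rightarrow> bool" where
  "graph_iso V E W F \<longleftrightarrow> (\<exists>f. bij_betw f V W \<and>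
     (\<forall>x\<in>V. \<forall>y\<in>V. {x, y} \<in> E \<longleftrightarrow> {f x, f y} \<in> F))"

definition delete_vertices :: "'a set \<Rightarrow> 'a set set \<Rightarrow> 'a set \<Rightarrow> 'a set \<times> 'a set set" where
  "delete_vertices V E S = (V - S, {e \<in> E. e \<subseteq> V - S})"

end

theory Submission
  imports Defs "HOL-Library.Transitive_Closure_Table"
begin

text \<open>Call a nonempty vertex set C a fragment if fewer than 2(k + m) - 1 outside vertices
have a neighbour in C, and take a fragment C of minimum size (V itself is one). Deleting
from C all neighbours of those boundary vertices that have fewer than k + m neighbours in C
leaves a core in which, by counting degrees, every vertex keeps more than 2(k + m)^2
neighbours; so T embeds greedily into the core. Let S be its image and suppose fewer than
k edges join the two sides A, B of a partition of V - S, where A contains fewer than k + m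
boundary vertices of C (one of the two sides does). If C misses A, then, G being
k-edge-connected, some vertex of A is adjacent to S; it is a boundary vertex of C adjacent to
the core, so it has at least k + m neighbours in C, hence at least k in B. Otherwise
C \<inter> A is a smaller fragment: its boundary lies in S, in the part of the boundary of C
inside A, and among the fewer than k endpoints of the cut in B.\<close>

section \<open>Neighbourhoods, boundaries and cuts\<close>

definition neighbours :: "'a set set \<Rightarrow> 'a \<Rightarrow> 'a set" where
  "neighbours E x = {y. {x, y} \<in> E}"

definition cut_edges :: "'a set set \<Rightarrow> 'a set \<Rightarrow> 'a set \<Rightarrow> 'a set set" where
  "cut_edges E A B = {e \<in> E. \<exists>a\<in>A. \<exists>b\<in>B. e = {a, b}}"

definition boundary :: "'a set set \<Rightarrow> 'a set \<Rightarrow> 'a set" where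
  "boundary E C = {y. y \<notin> C \<and> (\<exists>x\<in>C. {x, y} \<in> E)}"

definition graph_hom_on :: "('a \<Rightarrow> 'b) \<Rightarrow> 'a set \<Rightarrow> 'a set set \<Rightarrow> 'b set set \<Rightarrow> bool" where
  "graph_hom_on f P F E \<longleftrightarrow> (\<forall>x\<in>P. \<forall>y\<in>P. {x, y} \<in> F \<longrightarrow> {f x, f y} \<in> E)"

lemma card_le_card_Un3:
  assumes "A \<subseteq> X \<union> Y \<union> Z" "finite X" "finite Y" "finite Z"
  shows "card A \<le> card X + card Y + card Z"
proof -
  have "card A \<le> card (X \<union> Y \<union> Z)" using assms by (intro card_mono) auto
  also have "\<dots> \<le> card X + card Y + card Z"
    using card_Un_le[of "X \<union> Y" Z] card_Un_le[of X Y] by linarith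
  finally show ?thesis .
qed

lemma graph_edgeD:
  assumes "graph V E" "{x, y} \<in> E"
  shows "x \<noteq> y" "x \<in> V" "y \<in> V"
proof -
  from assms obtain a b where "a \<noteq> b" "a \<in> V" "b \<in> V" "{x, y} = {a, b}"
    unfolding graph_def by blast
  then show "x \<noteq> y" "x \<in> V" "y \<in> V" by (metis doubleton_eq_iff)+
qed

lemma graph_finite_edges: "graph V E \<Longrightarrow> finite E"
  unfolding graph_def by (rule finite_subset[of _ "Pow V"]) auto

lemma neighbours_subset: "graph V E \<Longrightarrow> neighbours E x \<subseteq> V"
  unfolding neighbours_def using graph_edgeD(3) by fastforce

lemma finite_neighbours: "graph V E \<Longrightarrow> finite (neighbours E x)"
  by (meson finite_subset graph_def neighbours_subset)

lemma not_in_neighbours: "graph V E \<Longrightarrow> x \<notin> neighbours E x"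
  unfolding neighbours_def using graph_edgeD(1) by fastforce

lemma degree_eq_card_neighbours:
  assumes "graph V E"
  shows "degree E v = card (neighbours E v)"
proof -
  have "{e \<in> E. v \<in> e} = (\<lambda>y. {v, y}) ` neighbours E v"
  proof (intro equalityI subsetI)
    fix e assume e: "e \<in> {e \<in> E. v \<in> e}"
    then obtain x y where "e = {x, y}" using assms unfolding graph_def by blast
    with e show "e \<in> (\<lambda>y. {v, y}) ` neighbours E v"
      unfolding neighbours_def by (auto simp: insert_commute)
  qed (auto simp: neighbours_def)
  moreover have "inj_on (\<lambda>y. {v, y}) (neighbours E v)"
    by (auto simp: inj_on_def doubleton_eq_iff)
  ultimately show ?thesis unfolding degree_def by (simp add: card_image)
qed

lemma neighbours_subset_boundary: "x \<in> C \<Longrightarrow> neighbours E x \<subseteq> C \<union> boundary E C"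
  unfolding neighbours_def boundary_def by blast

lemma boundary_subset: "graph V E \<Longrightarrow> boundary E C \<subseteq> V"
  unfolding boundary_def using graph_edgeD(3) by fastforce

lemma cut_edges_commute: "cut_edges E A B = cut_edges E B A"
  unfolding cut_edges_def by (auto simp: insert_commute)

lemma finite_cut_edges: "graph V E \<Longrightarrow> finite (cut_edges E A B)"
  unfolding cut_edges_def by (rule finite_subset[OF _ graph_finite_edges]) auto

lemma card_neighbours_Int_le_card_cut_edges:
  assumes "graph V E" "b \<in> B"
  shows "card (neighbours E b \<inter> A) \<le> card (cut_edges E A B)"
proof (rule card_inj_on_le[OF _ _ finite_cut_edges[OF assms(1)]])
  show "inj_on (\<lambda>a. {a, b}) (neighbours E b \<inter> A)"
    by (auto simp: inj_on_def doubleton_eq_iff)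
  show "(\<lambda>a. {a, b}) ` (neighbours E b \<inter> A) \<subseteq> cut_edges E A B"
    using assms(2) unfolding neighbours_def cut_edges_def by (auto simp: insert_commute)
qed

lemma card_adjacent_le_card_cut_edges:
  assumes "graph V E" "A \<inter> B = {}"
  shows "card {b \<in> B. \<exists>a\<in>A. {a, b} \<in> E} \<le> card (cut_edges E A B)"
proof -
  let ?T = "{b \<in> B. \<exists>a\<in>A. {a, b} \<in> E}"
  define g where "g b = (SOME a. a \<in> A \<and> {a, b} \<in> E)" for b
  have g: "g b \<in> A \<and> {g b, b} \<in> E" if "b \<in> ?T" for b
    unfolding g_def by (rule someI_ex) (use that in blast)
  have "inj_on (\<lambda>b. {g b, b}) ?T"
  proof (rule inj_onI)
    fix x y assume "x \<in> ?T" "y \<in> ?T" "{g x, x} = {g y, y}"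
    with g[OF \<open>x \<in> ?T\<close>] g[OF \<open>y \<in> ?T\<close>] assms(2) show "x = y"
      by (auto simp: doubleton_eq_iff)
  qed
  moreover have "(\<lambda>b. {g b, b}) ` ?T \<subseteq> cut_edges E A B"
    using g unfolding cut_edges_def by blast
  ultimately show ?thesis by (rule card_inj_on_le[OF _ _ finite_cut_edges[OF assms(1)]])
qed

lemma boundary_Int_subset:
  assumes "graph V E" "A \<union> B = V - S"
  shows "boundary E (C \<inter> A) \<subseteq> S \<union> (boundary E C \<inter> A) \<union> {b \<in> B. \<exists>a\<in>A. {a, b} \<in> E}"
proof
  fix y assume "y \<in> boundary E (C \<inter> A)"
  then obtain x where x: "x \<in> C \<inter> A" "{x, y} \<in> E" "y \<notin> C \<inter> A" unfolding boundary_def by blast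
  have "y \<in> V" using graph_edgeD(3)[OF assms(1) x(2)] .
  then consider "y \<in> S" | "y \<in> A" | "y \<in> B" using assms(2) by blast
  then show "y \<in> S \<union> (boundary E C \<inter> A) \<union> {b \<in> B. \<exists>a\<in>A. {a, b} \<in> E}"
  proof cases
    case 2
    with x have "y \<in> boundary E C" unfolding boundary_def by blast
    with 2 show ?thesis by blast
  next
    case 3
    with x show ?thesis by blast
  qed simp
qed

lemma rtrancl_adj_rel_leaves:
  assumes "(x, y) \<in> (adj_rel F)\<^sup>*" "x \<in> X" "y \<notin> X"
  obtains u v where "{u, v} \<in> F" "u \<in> X" "v \<notin> X"
  using assms(1,3)
proof (induction rule: rtrancl_induct)
  case base
  with assms(2) show ?case by simp
next
  case (step y z)
  then show ?case unfolding adj_rel_def by (cases "y \<in> X") auto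
qed

lemma rtrancl_adj_rel_mono: "F \<subseteq> F' \<Longrightarrow> (adj_rel F)\<^sup>* \<subseteq> (adj_rel F')\<^sup>*"
  unfolding adj_rel_def by (rule rtrancl_mono) auto

section \<open>Edge connectivity through cuts\<close>

lemma k_edge_connected_card_cut_edges:
  assumes "graph V E" "k_edge_connected V E k" "B \<subseteq> V" "B \<noteq> {}" "B \<noteq> V"
  shows "k \<le> card (cut_edges E B (V - B))"
proof (rule ccontr)
  assume "\<not> k \<le> card (cut_edges E B (V - B))"
  moreover have "card V \<noteq> 1"
    using assms(3-5) by (metis card_1_singletonE subset_singletonD)
  moreover have "cut_edges E B (V - B) \<subseteq> E" unfolding cut_edges_def by blast
  ultimately have conn: "connected_graph V (E - cut_edges E B (V - B))"
    using assms(2) unfolding k_edge_connected_def by auto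
  obtain b a where b: "b \<in> B" and a: "a \<in> V" "a \<notin> B" using assms(3-5) by blast
  with conn assms(3) have "(b, a) \<in> (adj_rel (E - cut_edges E B (V - B)))\<^sup>*"
    unfolding connected_graph_def by blast
  from rtrancl_adj_rel_leaves[OF this b a(2)] obtain u v
    where uv: "{u, v} \<in> E - cut_edges E B (V - B)" "u \<in> B" "v \<notin> B" .
  then have "v \<in> V" using graph_edgeD(3)[OF assms(1)] by blast
  with uv show False unfolding cut_edges_def by blast
qed

lemma cut_edges_reachable_subset:
  fixes V :: "'a set" and E U :: "'a set set" and x :: 'a
  defines "A \<equiv> {z \<in> V. (x, z) \<in> (adj_rel (E - U))\<^sup>*}"
  shows "cut_edges E A (V - A) \<subseteq> U"
proof
  fix e assume "e \<in> cut_edges E A (V - A)"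
  then obtain a b where e: "e \<in> E" "a \<in> A" "b \<in> V - A" "e = {a, b}"
    unfolding cut_edges_def by blast
  show "e \<in> U"
  proof (rule ccontr)
    assume "e \<notin> U"
    with e have "(a, b) \<in> adj_rel (E - U)" unfolding adj_rel_def by auto
    moreover have "(x, a) \<in> (adj_rel (E - U))\<^sup>*" using e unfolding A_def by blast
    ultimately have "(x, b) \<in> (adj_rel (E - U))\<^sup>*" by simp
    with e show False unfolding A_def by blast
  qed
qed

lemma card_cut_edges_imp_k_edge_connected:
  assumes "V \<noteq> {}" "card V \<noteq> 1" "finite E"
    and cut: "\<And>A. A \<subseteq> V \<Longrightarrow> A \<noteq> {} \<Longrightarrow> A \<noteq> V \<Longrightarrow> k \<le> card (cut_edges E A (V - A))"
  shows "k_edge_connected V E k"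
proof -
  have "(x, y) \<in> (adj_rel (E - U))\<^sup>*"
    if U: "U \<subseteq> E" "card U < k" and xy: "x \<in> V" "y \<in> V" for U x y
  proof (rule ccontr)
    assume "(x, y) \<notin> (adj_rel (E - U))\<^sup>*"
    define A where "A = {z \<in> V. (x, z) \<in> (adj_rel (E - U))\<^sup>*}"
    have "A \<subseteq> V" "A \<noteq> {}" "A \<noteq> V"
      using xy \<open>(x, y) \<notin> _\<close> unfolding A_def by auto
    then have "k \<le> card (cut_edges E A (V - A))" by (rule cut)
    also have "\<dots> \<le> card U"
      unfolding A_def
      by (rule card_mono[OF finite_subset[OF U(1) assms(3)] cut_edges_reachable_subset])
    finally show False using U by simp
  qed
  then show ?thesis
    unfolding k_edge_connected_def connected_graph_def using assms(1,2) by simp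
qed

lemma k_edge_connected_adjacent_to_rest:
  assumes "graph V E" "k_edge_connected V E k"
    and "S \<subseteq> V" "S \<noteq> {}" "A \<union> B = V - S" "A \<inter> B = {}" "B \<noteq> {}"
    and "card (cut_edges E A B) < k"
  obtains b s where "b \<in> B" "s \<in> S" "{s, b} \<in> E"
proof -
  have "k \<le> card (cut_edges E B (V - B))"
    using assms(3-7) by (intro k_edge_connected_card_cut_edges[OF assms(1,2)]) auto
  have "\<not> cut_edges E B (V - B) \<subseteq> cut_edges E B A"
  proof
    assume "cut_edges E B (V - B) \<subseteq> cut_edges E B A"
    then have "card (cut_edges E B (V - B)) \<le> card (cut_edges E A B)"
      using card_mono[OF finite_cut_edges[OF assms(1)]] by (simp add: cut_edges_commute)
    with \<open>k \<le> _\<close> assms(8) show False by simp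
  qed
  then obtain b y where "b \<in> B" "y \<in> V - B" "y \<notin> A" "{b, y} \<in> E"
    unfolding cut_edges_def by blast
  with assms(5) that show thesis by (auto simp: insert_commute)
qed

section \<open>Greedy embedding of trees\<close>

lemma sym_adj_rel: "sym (adj_rel F)"
  unfolding adj_rel_def sym_def by (simp add: insert_commute)

lemma tree_edge_leaving:
  assumes "tree VT ET" "P \<subseteq> VT" "P \<noteq> {}" "P \<noteq> VT"
  obtains p v where "p \<in> P" "v \<in> VT - P" "{p, v} \<in> ET"
proof -
  obtain x y where x: "x \<in> P" and y: "y \<in> VT" "y \<notin> P" using assms(2-4) by blast
  with assms(1,2) have "(x, y) \<in> (adj_rel ET)\<^sup>*"
    unfolding tree_def connected_graph_def by blast
  from rtrancl_adj_rel_leaves[OF this x y(2)] obtain p v where "{p, v} \<in> ET" "p \<in> P" "v \<notin> P" .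
  moreover have "v \<in> VT"
    using graph_edgeD(3)[OF _ \<open>{p, v} \<in> ET\<close>] assms(1) unfolding tree_def by simp
  ultimately show thesis using that by blast
qed

lemma connected_graph_insert_edge:
  assumes "connected_graph P {e \<in> F. e \<subseteq> P}" "p \<in> P" "{p, v} \<in> F"
  shows "connected_graph (insert v P) {e \<in> F. e \<subseteq> insert v P}"
proof -
  let ?R = "(adj_rel {e \<in> F. e \<subseteq> insert v P})\<^sup>*"
  have "(adj_rel {e \<in> F. e \<subseteq> P})\<^sup>* \<subseteq> ?R" by (rule rtrancl_adj_rel_mono) blast
  moreover have "(p, v) \<in> ?R" using assms(2,3) unfolding adj_rel_def by blast
  ultimately have from_p: "(p, a) \<in> ?R" if "a \<in> insert v P" for a
    using that assms(1,2) unfolding connected_graph_def by blast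
  have "(a, b) \<in> ?R" if "a \<in> insert v P" "b \<in> insert v P" for a b
  proof -
    have "(a, p) \<in> ?R" using from_p[OF that(1)] by (rule symD[OF sym_rtrancl[OF sym_adj_rel]])
    then show ?thesis using from_p[OF that(2)] by (rule rtrancl_trans)
  qed
  then show ?thesis unfolding connected_graph_def by blast
qed

lemma connected_graph_obtain_path:
  assumes "connected_graph P {e \<in> F. e \<subseteq> P}" "p \<in> P" "p' \<in> P" "p \<noteq> p'"
  obtains xs where "distinct (p # xs)" "xs \<noteq> []" "last xs = p'" "set xs \<subseteq> P"
    "\<And>j. j < length xs \<Longrightarrow> {(p # xs) ! j, xs ! j} \<in> F"
proof -
  let ?R = "\<lambda>a b. (a, b) \<in> adj_rel {e \<in> F. e \<subseteq> P}"
  have "(p, p') \<in> (adj_rel {e \<in> F. e \<subseteq> P})\<^sup>*"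
    using assms(1-3) unfolding connected_graph_def by blast
  then have "?R\<^sup>*\<^sup>* p p'" by (simp add: rtranclp_rtrancl_eq)
  then obtain ys where "rtrancl_path ?R p ys p'" unfolding rtranclp_eq_rtrancl_path ..
  then obtain xs where path: "rtrancl_path ?R p xs p'" and "distinct (p # xs)"
    by (rule rtrancl_path_distinct)
  moreover have "xs \<noteq> []" using path assms(4) by (auto elim: rtrancl_path.cases)
  moreover have "set xs \<subseteq> P"
  proof
    fix z assume "z \<in> set xs"
    then obtain a where "{a, z} \<in> F" "{a, z} \<subseteq> P"
      using rtrancl_path_Range[OF path] unfolding adj_rel_def by auto
    then show "z \<in> P" by simp
  qed
  moreover have "{(p # xs) ! j, xs ! j} \<in> F" if "j < length xs" for j
    using rtrancl_path_nth[OF path that] unfolding adj_rel_def by simp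
  ultimately show thesis using that rtrancl_path_last[OF path] by blast
qed

text \<open>A path inside P between two such neighbours would close a cycle through v.\<close>
lemma tree_unique_neighbour_in_subtree:
  assumes "tree VT ET" "P \<subseteq> VT" "connected_graph P {e \<in> ET. e \<subseteq> P}"
    and "v \<in> VT - P" "p \<in> P" "p' \<in> P" "{p, v} \<in> ET" "{p', v} \<in> ET"
  shows "p = p'"
proof (rule ccontr)
  assume "p \<noteq> p'"
  then obtain xs where xs: "distinct (p # xs)" "xs \<noteq> []" "last xs = p'" "set xs \<subseteq> P"
    and path: "\<And>j. j < length xs \<Longrightarrow> {(p # xs) ! j, xs ! j} \<in> ET"
    using connected_graph_obtain_path[OF assms(3,5,6)] by blast
  define cs where "cs = v # p # xs"
  have "is_cycle VT ET cs"
    unfolding is_cycle_def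
  proof (intro conjI allI impI)
    show "3 \<le> length cs" using xs(2) unfolding cs_def by (cases xs) auto
    show "distinct cs" using xs(1,4) assms(4,5) unfolding cs_def by auto
    show "set cs \<subseteq> VT" using xs(4) assms(2,4,5) unfolding cs_def by auto
    show "{last cs, hd cs} \<in> ET" using xs(2,3) assms(8) unfolding cs_def by simp
  next
    fix i assume i: "i < length cs - 1"
    show "{cs ! i, cs ! (i + 1)} \<in> ET"
    proof (cases i)
      case 0
      then show ?thesis using assms(7) unfolding cs_def by (simp add: insert_commute)
    next
      case (Suc j)
      with i have "j < length xs" unfolding cs_def by simp
      with path Suc show ?thesis unfolding cs_def by simp
    qed
  qed
  with assms(1) show False unfolding tree_def acyclic_graph_def by blast
qed

lemma exists_neighbour_outside:
  assumes "graph V E" "finite X" "x \<in> X" "card X \<le> card (neighbours E x \<inter> C)"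
  obtains c where "{x, c} \<in> E" "c \<in> C" "c \<notin> X"
proof -
  have "card (X - {x}) < card (neighbours E x \<inter> C)"
    using assms(2-4) card_gt_0_iff[of X] by auto
  then have "\<not> neighbours E x \<inter> C \<subseteq> X - {x}"
    using card_mono[OF finite_Diff[OF assms(2)]] leD by blast
  with not_in_neighbours[OF assms(1)] that show thesis unfolding neighbours_def by blast
qed

lemma graph_hom_on_insert:
  assumes "graph VT ET" "graph_hom_on f P ET E" "v \<notin> P" "p \<in> P" "{f p, c} \<in> E"
    and only_p: "\<And>q. q \<in> P \<Longrightarrow> {q, v} \<in> ET \<Longrightarrow> q = p"
  shows "graph_hom_on (f(v := c)) (insert v P) ET E"
  unfolding graph_hom_on_def
proof (intro ballI impI)
  fix x y assume xy: "x \<in> insert v P" "y \<in> insert v P" "{x, y} \<in> ET"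
  have "x \<noteq> y" using graph_edgeD(1)[OF assms(1) xy(3)] .
  then consider "x \<in> P" "y \<in> P" | "x = v" "y \<in> P" | "x \<in> P" "y = v"
    using xy(1,2) by blast
  then show "{(f(v := c)) x, (f(v := c)) y} \<in> E"
  proof cases
    case 1
    then show ?thesis using assms(2,3) xy(3) unfolding graph_hom_on_def by auto
  next
    case 2
    then have "y = p" using only_p xy(3) by (simp add: insert_commute)
    then show ?thesis using 2 assms(3-5) by (auto simp: insert_commute)
  next
    case 3
    then have "x = p" using only_p xy(3) by simp
    then show ?thesis using 3 assms(3-5) by auto
  qed
qed

lemma tree_embedding_extend:
  assumes T: "tree VT ET" and G: "graph V E"
    and deg: "\<forall>c\<in>C. card VT - 1 \<le> card (neighbours E c \<inter> C)"
    and P: "P \<subseteq> VT" "P \<noteq> {}" "P \<noteq> VT" "connected_graph P {e \<in> ET. e \<subseteq> P}"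
    and f: "inj_on f P" "f ` P \<subseteq> C" "graph_hom_on f P ET E"
  obtains v g where "v \<in> VT - P" "connected_graph (insert v P) {e \<in> ET. e \<subseteq> insert v P}"
    "inj_on g (insert v P)" "g ` insert v P \<subseteq> C" "graph_hom_on g (insert v P) ET E"
proof -
  obtain p v where pv: "p \<in> P" "v \<in> VT - P" "{p, v} \<in> ET"
    using tree_edge_leaving[OF T P(1-3)] .
  have gT: "graph VT ET" using T unfolding tree_def by simp
  then have "finite VT" unfolding graph_def by simp
  then have "card (f ` P) < card VT"
    using P(1,3) f(1) by (simp add: card_image psubset_card_mono psubsetI)
  with deg f(2) pv(1) have "card (f ` P) \<le> card (neighbours E (f p) \<inter> C)" by fastforce
  moreover have "finite (f ` P)" using P(1) \<open>finite VT\<close> finite_subset by blast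
  ultimately obtain c where c: "{f p, c} \<in> E" "c \<in> C" "c \<notin> f ` P"
    using exists_neighbour_outside[OF G _ imageI[OF pv(1)]] by blast
  have "inj_on (f(v := c)) (insert v P)"
    using f(1) c(3) pv(2) unfolding inj_on_def by auto
  moreover have "f(v := c) ` insert v P \<subseteq> C" using f(2) c(2) pv(2) by auto
  moreover have "graph_hom_on (f(v := c)) (insert v P) ET E"
    using graph_hom_on_insert[OF gT f(3) _ pv(1) c(1)] pv(2)
      tree_unique_neighbour_in_subtree[OF T P(1,4) pv(2) _ pv(1) _ pv(3)] by blast
  moreover have "connected_graph (insert v P) {e \<in> ET. e \<subseteq> insert v P}"
    using connected_graph_insert_edge[OF P(4) pv(1,3)] .
  ultimately show thesis using that pv(2) by blast
qed

lemma tree_partial_embedding_exists: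
  assumes T: "tree VT ET" and G: "graph V E" and "C \<noteq> {}"
    and deg: "\<forall>c\<in>C. card VT - 1 \<le> card (neighbours E c \<inter> C)"
    and "1 \<le> n" "n \<le> card VT"
  shows "\<exists>P f. P \<subseteq> VT \<and> card P = n \<and> connected_graph P {e \<in> ET. e \<subseteq> P} \<and>
      inj_on f P \<and> f ` P \<subseteq> C \<and> graph_hom_on f P ET E"
  using assms(5,6)
proof (induction n rule: nat_induct_at_least)
  case base
  have gT: "graph VT ET" and "VT \<noteq> {}"
    using T unfolding tree_def connected_graph_def by auto
  obtain r c where "r \<in> VT" "c \<in> C" using \<open>VT \<noteq> {}\<close> \<open>C \<noteq> {}\<close> by blast
  moreover have "{r, r} \<notin> ET" using graph_edgeD(1)[OF gT] by blast
  ultimately show ?case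
    unfolding connected_graph_def graph_hom_on_def
    by (intro exI[of _ "{r}"] exI[of _ "\<lambda>_. c"]) auto
next
  case (Suc n)
  have "finite VT" using T unfolding tree_def graph_def by simp
  from Suc obtain P f where P: "P \<subseteq> VT" "card P = n" "connected_graph P {e \<in> ET. e \<subseteq> P}"
    and f: "inj_on f P" "f ` P \<subseteq> C" "graph_hom_on f P ET E"
    by auto
  have "P \<noteq> {}" "P \<noteq> VT" using P(2) Suc(1,3) by auto
  then obtain v g where
    "v \<in> VT - P" "connected_graph (insert v P) {e \<in> ET. e \<subseteq> insert v P}"
    "inj_on g (insert v P)" "g ` insert v P \<subseteq> C" "graph_hom_on g (insert v P) ET E"
    by (rule tree_embedding_extend[OF T G deg P(1) _ _ P(3) f])
  moreover have "card (insert v P) = Suc n"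
    using P(1,2) \<open>finite VT\<close> \<open>v \<in> VT - P\<close> by (simp add: finite_subset)
  moreover have "insert v P \<subseteq> VT" using P(1) \<open>v \<in> VT - P\<close> by blast
  ultimately show ?case by (intro exI[of _ "insert v P"] exI[of _ g]) simp
qed

lemma tree_embedding_exists:
  assumes T: "tree VT ET" and G: "graph V E" and "C \<noteq> {}"
    and deg: "\<forall>c\<in>C. card VT - 1 \<le> card (neighbours E c \<inter> C)"
  obtains f where "inj_on f VT" "f ` VT \<subseteq> C" "graph_hom_on f VT ET E"
proof -
  have "VT \<noteq> {}" "finite VT"
    using T unfolding tree_def connected_graph_def graph_def by auto
  then have "1 \<le> card VT" by (simp add: Suc_leI card_gt_0_iff)
  then obtain P f where "P \<subseteq> VT" "card P = card VT"
    "inj_on f P" "f ` P \<subseteq> C" "graph_hom_on f P ET E"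
    using tree_partial_embedding_exists[OF T G \<open>C \<noteq> {}\<close> deg _ order.refl] by blast
  moreover from this have "P = VT" using \<open>finite VT\<close> by (simp add: card_subset_eq)
  ultimately show thesis using that by blast
qed

lemma subgraph_image:
  assumes "graph VT ET" "inj_on f VT" "f ` VT \<subseteq> V" "graph_hom_on f VT ET E"
  shows "subgraph (f ` VT) ((`) f ` ET) V E"
proof -
  have "graph (f ` VT) ((`) f ` ET)"
    unfolding graph_def
  proof (intro conjI ballI)
    show "finite (f ` VT)" using assms(1) unfolding graph_def by simp
    fix e' assume "e' \<in> (`) f ` ET"
    then obtain a b where "a \<noteq> b" "a \<in> VT" "b \<in> VT" "e' = {f a, f b}"
      using assms(1) unfolding graph_def by fastforce
    moreover from this have "f a \<noteq> f b" using assms(2) unfolding inj_on_def by blast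
    ultimately show "\<exists>x y. x \<noteq> y \<and> x \<in> f ` VT \<and> y \<in> f ` VT \<and> e' = {x, y}" by blast
  qed
  moreover have "(`) f ` ET \<subseteq> E"
    using assms(1,4) unfolding graph_def graph_hom_on_def by fastforce
  ultimately show ?thesis unfolding subgraph_def using assms(3) by blast
qed

lemma graph_iso_image:
  assumes "graph VT ET" "inj_on f VT"
  shows "graph_iso VT ET (f ` VT) ((`) f ` ET)"
  unfolding graph_iso_def
proof (intro exI[of _ f] conjI ballI)
  show "bij_betw f VT (f ` VT)" using assms(2) by (simp add: bij_betw_def)
  fix x y assume xy: "x \<in> VT" "y \<in> VT"
  show "{x, y} \<in> ET \<longleftrightarrow> {f x, f y} \<in> (`) f ` ET"
  proof
    assume "{x, y} \<in> ET"
    then show "{f x, f y} \<in> (`) f ` ET" by (metis image_empty image_insert imageI)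
  next
    assume "{f x, f y} \<in> (`) f ` ET"
    then obtain a b where ab: "a \<in> VT" "b \<in> VT" "{a, b} \<in> ET" "{f x, f y} = {f a, f b}"
      using assms(1) unfolding graph_def by fastforce
    then have "{x, y} = {a, b}"
      using assms(2) xy unfolding inj_on_def doubleton_eq_iff by metis
    with ab(3) show "{x, y} \<in> ET" by simp
  qed
qed

section \<open>Fragments of a dense edge-connected graph\<close>

locale dense_edge_connected_graph =
  fixes V :: "'a set" and E :: "'a set set" and k m :: nat
  assumes G: "graph V E" and k_pos: "0 < k"
    and kec: "k_edge_connected V E k"
    and min_degree_gt: "4 * (k + m)^2 < min_degree V E"
begin

definition fragment :: "'a set \<Rightarrow> bool" where
  "fragment C \<longleftrightarrow> C \<subseteq> V \<and> C \<noteq> {} \<and> card (boundary E C) + 2 \<le> 2 * (k + m)"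

definition weak_boundary :: "'a set \<Rightarrow> 'a set" where
  "weak_boundary C = {w \<in> boundary E C. card (neighbours E w \<inter> C) < k + m}"

definition core :: "'a set \<Rightarrow> 'a set" where
  "core C = C - (\<Union>w\<in>weak_boundary C. neighbours E w)"

lemma core_subset: "core C \<subseteq> C"
  unfolding core_def by blast

lemma finite_V: "finite V"
  using G unfolding graph_def by simp

lemma finite_boundary: "finite (boundary E C)"
  using boundary_subset[OF G] finite_V finite_subset by blast

lemma card_neighbours_gt: "v \<in> V \<Longrightarrow> 4 * (k + m)^2 < card (neighbours E v)"
  using min_degree_gt finite_V degree_eq_card_neighbours[OF G]
  unfolding min_degree_def by (metis Min_le finite_imageI imageI order.strict_trans2)

lemma card_V_gt: "4 * (k + m)^2 + 1 < card V"
proof -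
  obtain v where v: "v \<in> V" using kec unfolding k_edge_connected_def by blast
  have "insert v (neighbours E v) \<subseteq> V" using v neighbours_subset[OF G] by blast
  then have "card (insert v (neighbours E v)) \<le> card V" using finite_V by (rule card_mono[rotated])
  then show ?thesis
    using card_neighbours_gt[OF v] finite_neighbours[OF G] not_in_neighbours[OF G] by simp
qed

lemma fragment_V: "fragment V"
proof -
  have "boundary E V = {}" using boundary_subset[OF G] unfolding boundary_def by blast
  then show ?thesis
    using kec k_pos unfolding fragment_def k_edge_connected_def by simp
qed

lemma card_diff_core:
  assumes "fragment C"
  shows "card (C - core C) \<le> card (boundary E C) * (k + m)"
proof -
  have "finite C" using assms finite_V finite_subset unfolding fragment_def by blast
  have "finite (weak_boundary C)" using finite_boundary unfolding weak_boundary_def by simp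
  have "C - core C \<subseteq> (\<Union>w\<in>weak_boundary C. neighbours E w \<inter> C)" unfolding core_def by blast
  then have "card (C - core C) \<le> card (\<Union>w\<in>weak_boundary C. neighbours E w \<inter> C)"
    using \<open>finite C\<close> by (intro card_mono) auto
  also have "\<dots> \<le> (\<Sum>w\<in>weak_boundary C. card (neighbours E w \<inter> C))"
    by (rule card_UN_le[OF \<open>finite (weak_boundary C)\<close>])
  also have "\<dots> \<le> card (weak_boundary C) * (k + m)"
    using sum_bounded_above[of "weak_boundary C" "\<lambda>w. card (neighbours E w \<inter> C)" "k + m"]
    unfolding weak_boundary_def by fastforce
  also have "\<dots> \<le> card (boundary E C) * (k + m)"
    using finite_boundary unfolding weak_boundary_def by (simp add: card_mono)
  finally show ?thesis .
qed

lemma card_neighbours_core_gt: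
  assumes "fragment C" "c \<in> C"
  shows "2 * (k + m)^2 < card (neighbours E c \<inter> core C)"
proof -
  let ?L = "k + m" and ?b = "card (boundary E C)"
  have "C \<subseteq> V" using assms(1) unfolding fragment_def by blast
  then have "finite C" "c \<in> V" using assms(2) finite_V finite_subset by auto
  have "neighbours E c \<subseteq> (neighbours E c \<inter> core C) \<union> (C - core C) \<union> boundary E C"
    using neighbours_subset_boundary[OF assms(2)] by blast
  then have "card (neighbours E c) \<le> card (neighbours E c \<inter> core C) + card (C - core C) + ?b"
    using \<open>finite C\<close> finite_boundary finite_neighbours[OF G] by (intro card_le_card_Un3) auto
  also have "\<dots> \<le> card (neighbours E c \<inter> core C) + ?b * (?L + 1)"
    using card_diff_core[OF assms(1)] by simp
  finally have "4 * ?L^2 < card (neighbours E c \<inter> core C) + ?b * (?L + 1)"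
    using card_neighbours_gt[OF \<open>c \<in> V\<close>] by linarith
  \<comment> \<open>since b \<le> 2L - 2, the b (L + 1) subtracted neighbours are fewer than 2 L^2\<close>
  moreover have "(?b + 2) * (?L + 1) \<le> (2 * ?L) * (?L + 1)"
    using assms(1) unfolding fragment_def by (intro mult_right_mono) auto
  ultimately show ?thesis unfolding power2_eq_square by (simp add: algebra_simps)
qed

lemma core_nonempty:
  assumes "fragment C"
  shows "core C \<noteq> {}"
proof -
  obtain c where "c \<in> C" using assms unfolding fragment_def by blast
  from card_neighbours_core_gt[OF assms this] show ?thesis by auto
qed

lemma card_neighbours_core_gt_m:
  assumes "fragment C" "c \<in> core C"
  shows "m < card (neighbours E c \<inter> core C)"
proof -
  have "m < k + m" using k_pos by simp
  also have "\<dots> \<le> 2 * (k + m)^2" using le_square[of "k + m"] by (simp add: power2_eq_square)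
  also have "\<dots> < card (neighbours E c \<inter> core C)"
    using card_neighbours_core_gt[OF assms(1)] assms(2) core_subset by blast
  finally show ?thesis .
qed

lemma card_neighbours_ge_if_adjacent_core:
  assumes "b \<notin> C" "s \<in> core C" "{s, b} \<in> E"
  shows "k + m \<le> card (neighbours E b \<inter> C)"
proof -
  have "s \<in> neighbours E b" using assms(3) unfolding neighbours_def by (simp add: insert_commute)
  then have "b \<notin> weak_boundary C" using assms(2) unfolding core_def by blast
  moreover have "s \<in> C" using assms(2) core_subset by blast
  then have "b \<in> boundary E C" using assms(1,3) unfolding boundary_def by blast
  ultimately show ?thesis unfolding weak_boundary_def by simp
qed

lemma card_cut_edges_ge_if_disjoint:
  assumes "S \<subseteq> core C" "card S \<le> m" "C \<subseteq> V"
    and "A \<union> B = V - S" "C \<inter> B = {}" "b \<in> B" "s \<in> S" "{s, b} \<in> E"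
  shows "k \<le> card (cut_edges E A B)"
proof -
  have "S \<subseteq> V" using assms(1,3) core_subset by blast
  then have "finite S" using finite_V finite_subset by blast
  have "b \<notin> C" "s \<in> core C" using assms(1,5-7) by blast+
  then have "k + m \<le> card (neighbours E b \<inter> C)"
    using assms(8) by (rule card_neighbours_ge_if_adjacent_core)
  also have "\<dots> \<le> card ((neighbours E b \<inter> A) \<union> S)"
    using assms(3-5) \<open>finite S\<close> finite_neighbours[OF G] by (intro card_mono) auto
  also have "\<dots> \<le> card (neighbours E b \<inter> A) + m"
    using card_Un_le[of "neighbours E b \<inter> A" S] assms(2) by linarith
  finally have "k \<le> card (neighbours E b \<inter> A)" by simp
  also have "\<dots> \<le> card (cut_edges E A B)"
    by (rule card_neighbours_Int_le_card_cut_edges[OF G assms(6)])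
  finally show ?thesis .
qed

lemma fragment_Int:
  assumes "fragment C" "S \<subseteq> C" "card S \<le> m"
    and "A \<union> B = V - S" "A \<inter> B = {}" "C \<inter> A \<noteq> {}"
    and "card (boundary E C \<inter> A) < k + m" "card (cut_edges E A B) < k"
  shows "fragment (C \<inter> A)"
proof -
  let ?T = "{b \<in> B. \<exists>a\<in>A. {a, b} \<in> E}"
  have "C \<subseteq> V" using assms(1) unfolding fragment_def by blast
  then have "finite S" "finite ?T"
    using assms(2,4) finite_V finite_subset[of S V] finite_subset[of ?T V] by auto
  then have "card (boundary E (C \<inter> A)) \<le> card S + card (boundary E C \<inter> A) + card ?T"
    using boundary_Int_subset[OF G assms(4)] finite_boundary by (intro card_le_card_Un3) auto
  then have "card (boundary E (C \<inter> A)) + 2 \<le> 2 * (k + m)"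
    using card_adjacent_le_card_cut_edges[OF G assms(5)] assms(3,7,8) by arith
  with \<open>C \<subseteq> V\<close> assms(6) show ?thesis unfolding fragment_def by blast
qed

lemma card_cut_edges_ge_if_small_side:
  assumes C: "fragment C" and min: "\<And>C'. fragment C' \<Longrightarrow> card C \<le> card C'"
    and S: "S \<subseteq> core C" "S \<noteq> {}" "card S \<le> m"
    and AB: "A \<union> B = V - S" "A \<inter> B = {}" "A \<noteq> {}"
    and small_side: "card (boundary E C \<inter> A) < k + m"
  shows "k \<le> card (cut_edges E A B)"
proof (rule ccontr)
  assume "\<not> k \<le> card (cut_edges E A B)"
  then have cut_AB: "card (cut_edges E A B) < k" and cut_BA: "card (cut_edges E B A) < k"
    by (simp_all add: cut_edges_commute)
  have "C \<subseteq> V" using C unfolding fragment_def by blast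
  have "S \<subseteq> C" using S(1) core_subset by blast
  with \<open>C \<subseteq> V\<close> have "S \<subseteq> V" by blast
  show False
  proof (cases "C \<inter> A = {}")
    case True
    have BA: "B \<union> A = V - S" "B \<inter> A = {}" using AB(1,2) by auto
    obtain a s where "a \<in> A" "s \<in> S" "{s, a} \<in> E"
      by (rule k_edge_connected_adjacent_to_rest[OF G kec \<open>S \<subseteq> V\<close> S(2) BA AB(3) cut_BA])
    from card_cut_edges_ge_if_disjoint[OF S(1,3) \<open>C \<subseteq> V\<close> BA(1) True this] cut_BA show False
      by simp
  next
    case False
    have "fragment (C \<inter> A)"
      by (rule fragment_Int[OF C \<open>S \<subseteq> C\<close> S(3) AB(1,2) False small_side cut_AB])
    moreover have "C \<inter> A \<subset> C" using S(2) \<open>S \<subseteq> C\<close> AB(1) by blast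
    then have "card (C \<inter> A) < card C"
      using \<open>C \<subseteq> V\<close> finite_V by (meson finite_subset psubset_card_mono)
    ultimately show False using min by fastforce
  qed
qed

lemma card_cut_edges_ge:
  assumes C: "fragment C" and min: "\<And>C'. fragment C' \<Longrightarrow> card C \<le> card C'"
    and S: "S \<subseteq> core C" "S \<noteq> {}" "card S \<le> m"
    and AB: "A \<union> B = V - S" "A \<inter> B = {}" "A \<noteq> {}" "B \<noteq> {}"
  shows "k \<le> card (cut_edges E A B)"
proof -
  have "card (boundary E C \<inter> A) + card (boundary E C \<inter> B)
      = card ((boundary E C \<inter> A) \<union> (boundary E C \<inter> B))"
    using AB(2) finite_boundary by (intro card_Un_disjoint[symmetric]) auto
  also have "\<dots> \<le> card (boundary E C)"
    using finite_boundary by (intro card_mono) auto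
  moreover have "card (boundary E C) + 2 \<le> 2 * (k + m)" using C unfolding fragment_def by blast
  ultimately have "card (boundary E C \<inter> A) < k + m \<or> card (boundary E C \<inter> B) < k + m"
    by arith
  then show ?thesis
  proof
    assume "card (boundary E C \<inter> A) < k + m"
    from card_cut_edges_ge_if_small_side[OF C min S AB(1-3) this] show ?thesis .
  next
    assume "card (boundary E C \<inter> B) < k + m"
    moreover have "B \<union> A = V - S" "B \<inter> A = {}" using AB(1,2) by auto
    ultimately show ?thesis using card_cut_edges_ge_if_small_side[OF C min S _ _ AB(4)]
      by (simp add: cut_edges_commute)
  qed
qed

lemma k_edge_connected_delete_core_subset:
  assumes C: "fragment C" and min: "\<And>C'. fragment C' \<Longrightarrow> card C \<le> card C'"
    and S: "S \<subseteq> core C" "S \<noteq> {}" "card S \<le> m"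
  shows "k_edge_connected (V - S) {e \<in> E. e \<subseteq> V - S} k"
proof (rule card_cut_edges_imp_k_edge_connected)
  have "S \<subseteq> V" using S(1) C core_subset unfolding fragment_def by blast
  then have "card (V - S) = card V - card S"
    using card_Diff_subset[OF finite_subset[OF _ finite_V]] by blast
  moreover have "m \<le> 4 * (k + m)^2"
    unfolding power2_eq_square using le_square[of "k + m"] by linarith
  ultimately have "2 \<le> card (V - S)" using card_V_gt S(3) by linarith
  then show "V - S \<noteq> {}" by (metis card.empty not_numeral_le_zero)
  show "card (V - S) \<noteq> 1" using \<open>2 \<le> card (V - S)\<close> by simp
  show "finite {e \<in> E. e \<subseteq> V - S}" using graph_finite_edges[OF G] by simp
next
  fix A assume A: "A \<subseteq> V - S" "A \<noteq> {}" "A \<noteq> V - S"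
  then have "k \<le> card (cut_edges E A (V - S - A))"
    by (intro card_cut_edges_ge[OF C min S]) auto
  also have "cut_edges E A (V - S - A) = cut_edges {e \<in> E. e \<subseteq> V - S} A (V - S - A)"
    using A(1) unfolding cut_edges_def by blast
  finally show "k \<le> card (cut_edges {e \<in> E. e \<subseteq> V - S} A (V - S - A))" .
qed

end

theorem theorem3p3:
  fixes k m :: nat and VT :: "'b set" and ET :: "'b set set"
    and V :: "'a set" and E :: "'a set set"
  assumes "k > 0" and "m > 0"
    and "tree VT ET" and "card VT = m"
    and "graph V E" and "k_edge_connected V E k"
    and "min_degree V E > 4 * (k + m)^2"
  shows "\<exists>VT' ET'. subgraph VT' ET' V E \<and> graph_iso VT ET VT' ET' \<and>
           k_edge_connected (fst (delete_vertices V E VT')) (snd (delete_vertices V E VT')) k"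
proof -
  interpret dense_edge_connected_graph V E k m
    using assms by unfold_locales auto
  obtain C where C: "fragment C" and min: "\<And>C'. fragment C' \<Longrightarrow> card C \<le> card C'"
    using ex_has_least_nat[of fragment V card] fragment_V by blast
  have "\<forall>c\<in>core C. card VT - 1 \<le> card (neighbours E c \<inter> core C)"
    using card_neighbours_core_gt_m[OF C] assms(4) by fastforce
  then obtain f where f: "inj_on f VT" "f ` VT \<subseteq> core C" "graph_hom_on f VT ET E"
    by (rule tree_embedding_exists[OF assms(3) G core_nonempty[OF C]])
  have "graph VT ET" using assms(3) unfolding tree_def by simp
  then have "finite VT" unfolding graph_def by simp
  have "f ` VT \<subseteq> V" using f(2) C core_subset unfolding fragment_def by blast
  have "f ` VT \<noteq> {}" "card (f ` VT) \<le> m"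
    using assms(2,4) card_image_le[OF \<open>finite VT\<close>, of f] by auto
  with f(2) have "k_edge_connected (V - f ` VT) {e \<in> E. e \<subseteq> V - f ` VT} k"
    by (intro k_edge_connected_delete_core_subset[OF C min])
  with subgraph_image[OF \<open>graph VT ET\<close> f(1) \<open>f ` VT \<subseteq> V\<close> f(3)]
    graph_iso_image[OF \<open>graph VT ET\<close> f(1)] show ?thesis
    unfolding delete_vertices_def by auto
qed

end
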